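(* Let $i$ be a unit with an even number $n_i\ge4$ of observations $X_{ij}$, $j\in[n_i]$, i.i.d. $\mathcal N(0,1)$. Randomly (independently of the data) split $[n_i]$ into $\mathcal{N}_{i1},\mathcal{N}_{i2}$ of equal size $n_i/2$, let $\bar X_{i1},\bar X_{i2}$ be the corresponding sample means, $V_i=\bar X_{i1}+\bar X_{i2}$, $V_i^0=\bar X_{i1}-\bar X_{i2}$, and $S_i^*=\sqrt{\frac1{n_i-1}\sum_{j=1}^{n_i}(X_{ij}-\bar X_i)^2}$ with $\bar X_i$ the mean of all $n_i$ observations. Define $T_i^*=\Phi^{-1}\{G_{t,n_i-2}(V_i/S_i^* )\}$ and $T_i^{0,*}=\Phi^{-1}\{G_{t,n_i-2}(V_i^0/S_i^* )\}$. Then $T_i^*$ and $T_i^{0,*}$ do not have the same distribution; consequently, for any family of such pairs $(T_k^*,T_k^{0,*})_{k\in[m]}$ containing unit $i$, $(T_i^*,T_i^{0,*}\mid\mathbf{T}^*_{-i},\mathbf{T}^{0,*}_{-i})\not\stackrel{d}{=}(T_i^{0,*},T_i^*\mid\mathbf{T}^*_{-i},\mathbf{T}^{0,*}_{-i})$, i.e. pairwise exchangeability fails.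
   Context: $\Phi$ is the standard normal CDF, $G_{t,\nu}$ the CDF of the $t_\nu$ distribution; $\mathbf{T}^*_{-i}=(T^*_k:k\ne i)$, $\mathbf{T}^{0,*}_{-i}=(T^{0,*}_k:k\ne i)$. *)

theory Defs
  imports "HOL-Probability.Probability"
begin

definition Phi :: "real \<Rightarrow> real" where
  "Phi x = (\<integral>t. indicator {..x} t * std_normal_density t \<partial>lborel)"

definition Phi_inv :: "real \<Rightarrow> real" where
  "Phi_inv p = (THE x. Phi x = p)"

definition t_density :: "real \<Rightarrow> real \<Rightarrow> real" where
  "t_density \<nu> x = Gamma ((\<nu> + 1) / 2) / (sqrt (\<nu> * pi) * Gamma (\<nu> / 2))
                     * (1 + x\<^sup>2 / \<nu>) powr (- (\<nu> + 1) / 2)"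

definition t_CDF :: "real \<Rightarrow> real \<Rightarrow> real" where
  "t_CDF \<nu> x = (\<integral>t. indicator {..x} t * t_density \<nu> t \<partial>lborel)"

definition smean :: "nat set \<Rightarrow> (nat \<Rightarrow> real) \<Rightarrow> real" where
  "smean A x = (\<Sum>j\<in>A. x j) / real (card A)"

definition Sstar :: "nat \<Rightarrow> (nat \<Rightarrow> real) \<Rightarrow> real" where
  "Sstar n x = sqrt (1 / (real n - 1) * (\<Sum>j<n. (x j - smean {..<n} x)\<^sup>2))"

definition Tstar :: "nat \<Rightarrow> nat set \<Rightarrow> (nat \<Rightarrow> real) \<Rightarrow> real" where
  "Tstar n N1 x = Phi_inv (t_CDF (real n - 2)
      ((smean N1 x + smean ({..<n} - N1) x) / Sstar n x))"

definition T0star :: "nat \<Rightarrow> nat set \<Rightarrow> (nat \<Rightarrow> real) \<Rightarrow> real" where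
  "T0star n N1 x = Phi_inv (t_CDF (real n - 2)
      ((smean N1 x - smean ({..<n} - N1) x) / Sstar n x))"

end

theory Submission
  imports Defs
begin

(* Whatever the split, each half-sample mean lies within sqrt (sum_j (X_j - Xbar)^2) =
   sqrt (n - 1) * S* of the overall mean, so |V^0 / S*| <= 2 sqrt (n - 1) and T^{0,*} is
   bounded below by some w. In contrast V = 2 Xbar, so V / S* is arbitrarily negative when all
   observations lie in a short interval just below -1, an event of positive probability; as
   Phi^{-1} o G_{t,n-2} tends to -infinity at -infinity, T^* < w with positive probability.
   Hence T^* and T^{0,*} have different laws, and swapping them in one coordinate changes the
   joint law of the family. *)

lemma finite_borel_measure_density_lborel:
  fixes f :: "real \<Rightarrow> real"
  assumes f: "integrable lborel f" and nonneg: "\<And>x. 0 \<le> f x"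
  shows "finite_borel_measure (density lborel f)"
proof -
  have "emeasure (density lborel f) UNIV = ennreal (\<integral>x. f x \<partial>lborel)"
    using f nonneg by (simp add: emeasure_density nn_integral_eq_integral)
  then show ?thesis
    by (intro finite_borel_measure.intro finite_measureI finite_borel_measure_axioms.intro) auto
qed

lemma cdf_density_lborel:
  fixes f :: "real \<Rightarrow> real"
  assumes f: "integrable lborel f" and nonneg: "\<And>x. 0 \<le> f x"
  shows "cdf (density lborel f) x = (\<integral>t. indicator {..x} t * f t \<partial>lborel)"
proof -
  interpret finite_borel_measure "density lborel f"
    using finite_borel_measure_density_lborel[OF assms] .
  have "cdf (density lborel f) x = (\<integral>t. indicator {..x} t \<partial>density lborel f)"
    by (simp add: cdf_def)
  also have "\<dots> = (\<integral>t. f t * indicator {..x} t \<partial>lborel)"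
    using f nonneg by (intro integral_real_density) auto
  finally show ?thesis by (simp add: mult.commute)
qed

lemma measure_density_lborel_Ioc_pos:
  fixes f :: "real \<Rightarrow> real"
  assumes f: "integrable lborel f" and pos: "\<And>x. 0 < f x" and "a < b"
  shows "0 < measure (density lborel f) {a<..b}"
proof -
  interpret finite_borel_measure "density lborel f"
    using finite_borel_measure_density_lborel[OF f] pos less_imp_le by blast
  have "{a<..b} \<notin> null_sets lborel"
    using \<open>a < b\<close> by (simp add: null_sets_def)
  then have "\<not> (AE x in lborel. x \<notin> {a<..b})"
    using AE_iff_null_sets[of "{a<..b}" lborel] by simp
  moreover have "ennreal (f x) \<noteq> 0" for x
    using pos[of x] by simp
  ultimately have "{a<..b} \<notin> null_sets (density lborel f)"
    using f by (simp add: null_sets_density_iff)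
  then show ?thesis
    by (simp add: emeasure_eq_measure zero_less_measure_iff null_sets_def)
qed

lemma Phi_eq_cdf: "Phi = cdf (density lborel std_normal_density)"
  by (simp add: fun_eq_iff Phi_def cdf_density_lborel)

interpretation std_normal: real_distribution "density lborel std_normal_density"
  by (simp add: real_distribution_def real_distribution_axioms_def prob_space_normal_density)

lemma strict_mono_Phi: "strict_mono Phi"
proof (rule strict_monoI)
  fix x y :: real
  assume "x < y"
  then have "0 < measure (density lborel std_normal_density) {x<..y}"
    by (intro measure_density_lborel_Ioc_pos normal_density_pos) auto
  then show "Phi x < Phi y"
    using std_normal.cdf_diff_eq[OF \<open>x < y\<close>] by (simp add: Phi_eq_cdf)
qed

lemma isCont_Phi: "isCont Phi x"
proof -
  have "AE y in lborel. y \<in> {x} \<longrightarrow> ennreal (std_normal_density y) = 0"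
    using AE_lborel_singleton[of x] by eventually_elim auto
  then have "{x} \<in> null_sets (density lborel std_normal_density)"
    by (subst null_sets_density_iff) auto
  then show ?thesis
    by (simp add: Phi_eq_cdf std_normal.isCont_cdf measure_def null_setsD1)
qed

lemma Phi_tendsto_at_bot: "(Phi \<longlongrightarrow> 0) at_bot"
  unfolding Phi_eq_cdf by (rule std_normal.cdf_lim_at_bot)

lemma Phi_tendsto_at_top: "(Phi \<longlongrightarrow> 1) at_top"
  unfolding Phi_eq_cdf by (rule std_normal.cdf_lim_at_top_prob)

lemma Phi_pos: "0 < Phi x"
  using strict_mono_less[OF strict_mono_Phi, of "x - 1" x] std_normal.cdf_nonneg[of "x - 1"]
  by (simp add: Phi_eq_cdf)

lemma Phi_less_1: "Phi x < 1"
  using strict_mono_less[OF strict_mono_Phi, of x "x + 1"] std_normal.cdf_bounded_prob[of "x + 1"]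
  by (simp add: Phi_eq_cdf)

lemma Phi_surj:
  assumes "0 < p" "p < 1"
  shows "\<exists>x. Phi x = p"
proof -
  obtain a where a: "Phi a < p"
    using order_tendstoD(2)[OF Phi_tendsto_at_bot \<open>0 < p\<close>]
    by (auto simp: eventually_at_bot_linorder)
  obtain c where "\<forall>x\<ge>c. p < Phi x"
    using order_tendstoD(1)[OF Phi_tendsto_at_top \<open>p < 1\<close>]
    by (auto simp: eventually_at_top_linorder)
  then obtain b where b: "a \<le> b" "p < Phi b"
    by (meson max.cobounded1 max.cobounded2)
  show ?thesis
    using IVT'[of Phi a p b] a b isCont_Phi by (auto intro: continuous_at_imp_continuous_on)
qed

lemma Phi_Phi_inv:
  assumes "0 < p" "p < 1"
  shows "Phi (Phi_inv p) = p"
  unfolding Phi_inv_def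
  using Phi_surj[OF assms] strict_mono_eq[OF strict_mono_Phi] by (metis (mono_tags) theI)

(* Outside (0, 1) the description in Phi_inv has no solution, so it returns one and the same
   unspecified value. *)
lemma Phi_inv_outside:
  assumes "p \<notin> {0<..<1}"
  shows "Phi_inv p = Phi_inv 0"
proof -
  have "Phi x \<noteq> p \<and> Phi x \<noteq> 0" for x
    using assms Phi_pos[of x] Phi_less_1[of x] by auto
  then have "(\<lambda>x. Phi x = p) = (\<lambda>x. Phi x = 0)"
    by auto
  then show ?thesis
    unfolding Phi_inv_def by simp
qed

lemma Phi_inv_less_iff:
  assumes "0 < p" "p < 1"
  shows "Phi_inv p < x \<longleftrightarrow> p < Phi x"
  using strict_mono_less[OF strict_mono_Phi, of "Phi_inv p" x] by (simp add: Phi_Phi_inv assms)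

lemma less_Phi_inv_iff:
  assumes "0 < p" "p < 1"
  shows "x < Phi_inv p \<longleftrightarrow> Phi x < p"
  using strict_mono_less[OF strict_mono_Phi, of x "Phi_inv p"] by (simp add: Phi_Phi_inv assms)

lemma mono_on_Phi_inv: "mono_on {0<..<1} Phi_inv"
proof (rule mono_onI)
  fix p q :: real
  assume "p \<in> {0<..<1}" "q \<in> {0<..<1}" "p \<le> q"
  then show "Phi_inv p \<le> Phi_inv q"
    by (auto simp: not_less[symmetric] Phi_inv_less_iff Phi_Phi_inv)
qed

lemma borel_measurable_Phi_inv: "Phi_inv \<in> borel_measurable borel"
proof (rule borel_measurable_piecewise_mono[of "{{0<..<1}, - {0<..<1}}"])
  have "mono_on (- {0<..<1}) Phi_inv"
    by (rule mono_onI) (simp add: Phi_inv_outside del: greaterThanLessThan_iff)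
  then show "mono_on c Phi_inv" if "c \<in> {{0<..<1}, - {0<..<1}}" for c :: "real set"
    using that mono_on_Phi_inv by blast
qed (auto simp: borel_comp)

(* G may reach 1 (the t density is never shown to integrate to 1); there Phi_inv yields its
   unspecified value, and w is chosen below that value as well. *)
lemma Phi_inv_comp_separates:
  fixes G :: "real \<Rightarrow> real"
  assumes mono: "mono G" and pos: "\<And>y. 0 < G y" and lim: "(G \<longlongrightarrow> 0) at_bot"
  shows "\<exists>w y0. (\<forall>y\<ge>K. w < Phi_inv (G y)) \<and> (\<forall>y\<le>y0. Phi_inv (G y) < w)"
proof -
  have "eventually (\<lambda>w. Phi w < G K \<and> w < Phi_inv 0) at_bot"
    using order_tendstoD(2)[OF Phi_tendsto_at_bot pos[of K]]
      eventually_at_bot_linorderI[of "Phi_inv 0 - 1" "\<lambda>w. w < Phi_inv 0"]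
    by (auto intro: eventually_conj)
  then obtain w where w: "Phi w < G K" "w < Phi_inv 0"
    by (auto simp: eventually_at_bot_linorder)
  obtain y0 where y0: "\<And>y. y \<le> y0 \<Longrightarrow> G y < Phi w"
    using order_tendstoD(2)[OF lim Phi_pos[of w]] by (auto simp: eventually_at_bot_linorder)
  have "w < Phi_inv (G y)" if "K \<le> y" for y
  proof (cases "G y < 1")
    case True
    then show ?thesis
      using w(1) monoD[OF mono that] pos[of y] by (simp add: less_Phi_inv_iff)
  next
    case False
    then show ?thesis
      using w(2) Phi_inv_outside[of "G y"] by simp
  qed
  moreover have "Phi_inv (G y) < w" if "y \<le> y0" for y
    using y0[OF that] Phi_less_1[of w] pos[of y] by (simp add: Phi_inv_less_iff)
  ultimately show ?thesis
    by blast
qed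

lemma t_density_pos:
  assumes "0 < \<nu>"
  shows "0 < t_density \<nu> x"
proof -
  have "0 < 1 + x\<^sup>2 / \<nu>"
    using assms by (simp add: add_pos_nonneg)
  then show ?thesis
    unfolding t_density_def using assms by (auto intro!: Gamma_real_pos)
qed

lemma integrable_t_density:
  assumes "1 \<le> \<nu>"
  shows "integrable lborel (t_density \<nu>)"
proof -
  define C where "C = Gamma ((\<nu> + 1) / 2) / (sqrt (\<nu> * pi) * Gamma (\<nu> / 2))"
  have "0 < C"
    unfolding C_def using assms by (auto intro!: Gamma_real_pos)
  have "t_density \<nu> x \<le> C * \<nu> * inverse (1 + x\<^sup>2)" for x
  proof -
    have base: "1 \<le> 1 + x\<^sup>2 / \<nu>"
      using assms by simp
    have "(1 + x\<^sup>2 / \<nu>) powr (- (\<nu> + 1) / 2) \<le> (1 + x\<^sup>2 / \<nu>) powr (-1)"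
      using assms base by (intro powr_mono) auto
    also have "\<dots> = \<nu> / (\<nu> + x\<^sup>2)"
      using assms base by (simp add: powr_minus field_simps)
    also have "\<dots> \<le> \<nu> / (1 + x\<^sup>2)"
      using assms by (intro divide_left_mono) (auto intro!: mult_pos_pos add_pos_nonneg)
    finally have "(1 + x\<^sup>2 / \<nu>) powr (- (\<nu> + 1) / 2) \<le> \<nu> * inverse (1 + x\<^sup>2)"
      by (simp only: divide_inverse)
    moreover have "t_density \<nu> x = C * (1 + x\<^sup>2 / \<nu>) powr (- (\<nu> + 1) / 2)"
      by (simp add: t_density_def C_def)
    ultimately show ?thesis
      using mult_left_mono[of _ _ C] \<open>0 < C\<close> by (metis less_imp_le mult.assoc)
  qed
  moreover have "0 < t_density \<nu> x" for x
    using assms by (simp add: t_density_pos)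
  ultimately have "AE x in lborel. norm (t_density \<nu> x) \<le> norm (C * \<nu> * inverse (1 + x\<^sup>2))"
    by (intro AE_I2) (metis abs_ge_self abs_of_pos order.trans real_norm_def)
  moreover have "integrable lborel (\<lambda>x. C * \<nu> * inverse (1 + x\<^sup>2))"
    using integrable_inverse_1_plus_square by (simp add: set_integrable_def)
  moreover have "t_density \<nu> \<in> borel_measurable lborel"
    unfolding t_density_def by measurable
  ultimately show ?thesis
    using Bochner_Integration.integrable_bound by blast
qed

lemma t_CDF_eq_cdf:
  assumes "1 \<le> \<nu>"
  shows "t_CDF \<nu> = cdf (density lborel (t_density \<nu>))"
proof -
  have "0 \<le> t_density \<nu> x" for x
    using assms t_density_pos[of \<nu> x] by simp
  then show ?thesis
    by (simp add: fun_eq_iff t_CDF_def cdf_density_lborel integrable_t_density[OF assms])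
qed

lemma
  assumes "1 \<le> \<nu>"
  shows mono_t_CDF: "mono (t_CDF \<nu>)"
    and t_CDF_pos: "0 < t_CDF \<nu> x"
    and t_CDF_tendsto_at_bot: "(t_CDF \<nu> \<longlongrightarrow> 0) at_bot"
proof -
  have pos: "0 < t_density \<nu> y" for y
    using assms by (simp add: t_density_pos)
  then have nonneg: "0 \<le> t_density \<nu> y" for y
    by (simp add: less_imp_le)
  interpret finite_borel_measure "density lborel (t_density \<nu>)"
    by (rule finite_borel_measure_density_lborel[OF integrable_t_density[OF assms] nonneg])
  show "mono (t_CDF \<nu>)"
    unfolding t_CDF_eq_cdf[OF assms] by (rule monoI) (rule cdf_nondecreasing)
  show "(t_CDF \<nu> \<longlongrightarrow> 0) at_bot"
    unfolding t_CDF_eq_cdf[OF assms] by (rule cdf_lim_at_bot)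
  have "0 < measure (density lborel (t_density \<nu>)) {x - 1<..x}"
    by (rule measure_density_lborel_Ioc_pos[OF integrable_t_density[OF assms] pos]) simp
  then show "0 < t_CDF \<nu> x"
    using cdf_diff_eq[of "x - 1" x] cdf_nonneg[of "x - 1"] by (simp add: t_CDF_eq_cdf[OF assms])
qed

definition studentized_sum :: "nat \<Rightarrow> nat set \<Rightarrow> (nat \<Rightarrow> real) \<Rightarrow> real" where
  "studentized_sum n N x = (smean N x + smean ({..<n} - N) x) / Sstar n x"

definition studentized_contrast :: "nat \<Rightarrow> nat set \<Rightarrow> (nat \<Rightarrow> real) \<Rightarrow> real" where
  "studentized_contrast n N x = (smean N x - smean ({..<n} - N) x) / Sstar n x"

lemma abs_smean_diff_le_sqrt_sum_sq:
  fixes x :: "nat \<Rightarrow> real"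
  assumes "A \<subseteq> {..<n}" "A \<noteq> {}"
  shows "\<bar>smean A x - c\<bar> \<le> sqrt (\<Sum>i<n. (x i - c)\<^sup>2)"
proof -
  let ?Q = "sqrt (\<Sum>i<n. (x i - c)\<^sup>2)"
  have "finite A"
    using assms(1) finite_subset by blast
  then have card: "0 < card A"
    using assms(2) by (simp add: card_gt_0_iff)
  have term_le: "\<bar>x j - c\<bar> \<le> ?Q" if "j \<in> A" for j
  proof -
    have "(x j - c)\<^sup>2 \<le> (\<Sum>i<n. (x i - c)\<^sup>2)"
      using assms(1) that by (intro member_le_sum) auto
    then show ?thesis
      using real_sqrt_le_mono by fastforce
  qed
  have "smean A x - c = (\<Sum>j\<in>A. x j - c) / card A"
    using card by (simp add: smean_def sum_subtractf diff_divide_distrib)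
  then have "\<bar>smean A x - c\<bar> = \<bar>\<Sum>j\<in>A. x j - c\<bar> / card A"
    by simp
  also have "\<dots> \<le> (\<Sum>j\<in>A. \<bar>x j - c\<bar>) / card A"
    by (intro divide_right_mono sum_abs) simp
  also have "\<dots> \<le> (\<Sum>j\<in>A. ?Q) / card A"
    using term_le by (intro divide_right_mono sum_mono) auto
  also have "\<dots> = ?Q"
    using card by simp
  finally show ?thesis .
qed

lemma sqrt_sum_sq_eq_Sstar:
  assumes "2 \<le> n"
  shows "sqrt (\<Sum>i<n. (x i - smean {..<n} x)\<^sup>2) = sqrt (real n - 1) * Sstar n x"
  using assms by (simp add: Sstar_def real_sqrt_mult[symmetric])

lemma abs_studentized_contrast_le:
  assumes "2 \<le> n" "N \<subseteq> {..<n}" "N \<noteq> {}" "{..<n} - N \<noteq> {}"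
  shows "\<bar>studentized_contrast n N x\<bar> \<le> 2 * sqrt (real n - 1)"
proof -
  let ?m = "smean {..<n} x"
  have "\<bar>smean N x - smean ({..<n} - N) x\<bar> \<le> \<bar>smean N x - ?m\<bar> + \<bar>smean ({..<n} - N) x - ?m\<bar>"
    by linarith
  also have "\<dots> \<le> 2 * sqrt (\<Sum>i<n. (x i - ?m)\<^sup>2)"
    using abs_smean_diff_le_sqrt_sum_sq[OF assms(2,3), of x ?m]
      abs_smean_diff_le_sqrt_sum_sq[OF Diff_subset assms(4), of x ?m] by linarith
  also have "\<dots> = 2 * sqrt (real n - 1) * Sstar n x"
    using assms(1) by (simp add: sqrt_sum_sq_eq_Sstar)
  finally have "\<bar>smean N x - smean ({..<n} - N) x\<bar> \<le> 2 * sqrt (real n - 1) * Sstar n x" .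
  moreover have "0 \<le> Sstar n x"
    unfolding Sstar_def using assms(1) by (intro real_sqrt_ge_zero mult_nonneg_nonneg sum_nonneg) auto
  ultimately show ?thesis
    unfolding studentized_contrast_def using assms(1)
    by (cases "Sstar n x = 0") (auto simp: abs_div pos_divide_le_eq)
qed

lemma studentized_contrast_lower_bound:
  assumes "N \<subseteq> {..<n}" "2 * card N = n" "2 \<le> n"
  shows "- 2 * sqrt (real n - 1) \<le> studentized_contrast n N x"
proof -
  have "finite N"
    using assms(1) finite_subset by blast
  then have "N \<noteq> {}" "{..<n} - N \<noteq> {}"
    using assms card_Diff_subset[of N "{..<n}"] by auto
  then have "\<bar>studentized_contrast n N x\<bar> \<le> 2 * sqrt (real n - 1)"
    using assms by (intro abs_studentized_contrast_le) auto
  then show ?thesis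
    by (simp add: abs_le_iff)
qed

lemma smean_add_smean_complement:
  assumes "N \<subseteq> {..<n}" "2 * card N = n"
  shows "smean N x + smean ({..<n} - N) x = 2 * smean {..<n} x"
proof -
  have "finite N"
    using assms(1) finite_subset by blast
  then have "card ({..<n} - N) = card N"
    using assms by (simp add: card_Diff_subset)
  moreover have "sum x {..<n} = sum x N + sum x ({..<n} - N)"
    using assms(1) by (simp add: sum.subset_diff)
  ultimately show ?thesis
    by (cases "card N = 0") (simp_all add: smean_def assms(2)[symmetric] field_simps)
qed

lemma Sstar_pos:
  assumes "i < n" "j < n" "x i \<noteq> x j"
  shows "0 < Sstar n x"
proof -
  let ?m = "smean {..<n} x"
  have "i \<noteq> j"
    using assms(3) by blast
  then have "1 < real n"
    using assms(1,2) by linarith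
  have "(x i - ?m)\<^sup>2 + (x j - ?m)\<^sup>2 > 0"
    using assms(3) by (smt (verit) zero_less_power2 zero_le_power2)
  also have "(x i - ?m)\<^sup>2 + (x j - ?m)\<^sup>2 \<le> (\<Sum>k<n. (x k - ?m)\<^sup>2)"
    using sum_mono2[of "{..<n}" "{i, j}" "\<lambda>k. (x k - ?m)\<^sup>2"] assms \<open>i \<noteq> j\<close> by auto
  finally have "0 < 1 / (real n - 1) * (\<Sum>k<n. (x k - ?m)\<^sup>2)"
    using \<open>1 < real n\<close> by simp
  then show ?thesis
    unfolding Sstar_def by (rule real_sqrt_gt_zero)
qed

lemma Sstar_less:
  assumes "2 \<le> n" "\<And>j. j < n \<Longrightarrow> \<bar>x j - smean {..<n} x\<bar> < \<delta>"
  shows "Sstar n x < 2 * \<delta>"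
proof -
  let ?m = "smean {..<n} x"
  have "0 < \<delta>"
    using assms(1) assms(2)[of 0] by linarith
  have "(x i - ?m)\<^sup>2 < \<delta>\<^sup>2" if "i < n" for i
    using power_strict_mono[OF assms(2)[OF that] abs_ge_zero, of 2] by simp
  then have "(\<Sum>i<n. (x i - ?m)\<^sup>2) < (\<Sum>i<n. \<delta>\<^sup>2)"
    using assms(1) by (intro sum_strict_mono) (auto simp: lessThan_empty_iff)
  also have "\<dots> = real n * \<delta>\<^sup>2"
    by simp
  also have "\<dots> \<le> 4 * (real n - 1) * \<delta>\<^sup>2"
    using assms(1) by (intro mult_right_mono) auto
  also have "\<dots> = (real n - 1) * (2 * \<delta>)\<^sup>2"
    by (simp add: power_mult_distrib)
  finally have "1 / (real n - 1) * (\<Sum>i<n. (x i - ?m)\<^sup>2) < (2 * \<delta>)\<^sup>2"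
    using assms(1) by (simp add: field_simps)
  then have "Sstar n x < sqrt ((2 * \<delta>)\<^sup>2)"
    unfolding Sstar_def by (rule real_sqrt_less_mono)
  then show ?thesis
    using \<open>0 < \<delta>\<close> real_sqrt_abs[of "2 * \<delta>"] by simp
qed

lemma studentized_sum_less:
  assumes "N \<subseteq> {..<n}" "2 * card N = n" "2 \<le> n" "c < 0"
    and box: "\<And>j. j < n \<Longrightarrow> x j \<in> {c - \<delta><..c}" and "x 0 \<noteq> x 1"
  shows "studentized_sum n N x < c / \<delta>"
proof -
  let ?m = "smean {..<n} x"
  have "(\<Sum>j<n. c - \<delta>) < (\<Sum>j<n. x j)"
    using box assms(3) by (intro sum_strict_mono) (auto simp: lessThan_empty_iff)
  moreover have "(\<Sum>j<n. x j) \<le> (\<Sum>j<n. c)"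
    using box by (intro sum_mono) auto
  ultimately have "?m \<in> {c - \<delta><..c}"
    using assms(3) by (simp add: smean_def field_simps)
  then have "\<bar>x j - ?m\<bar> < \<delta>" if "j < n" for j
    using box[OF that] by auto
  then have "Sstar n x < 2 * \<delta>"
    using Sstar_less assms(3) by blast
  have "0 < Sstar n x"
    using Sstar_pos[of 0 n 1 x] assms(3,6) by simp
  have "studentized_sum n N x = 2 * ?m / Sstar n x"
    using assms(1,2) by (simp add: studentized_sum_def smean_add_smean_complement)
  also have "\<dots> \<le> 2 * c / Sstar n x"
    using \<open>?m \<in> {c - \<delta><..c}\<close> \<open>0 < Sstar n x\<close> by (intro divide_right_mono) auto
  also have "\<dots> < 2 * c / (2 * \<delta>)"
    using \<open>Sstar n x < 2 * \<delta>\<close> \<open>0 < Sstar n x\<close> \<open>c < 0\<close>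
    by (intro divide_strict_left_mono_neg) auto
  also have "\<dots> = c / \<delta>"
    by simp
  finally show ?thesis .
qed

lemma borel_measurable_smean:
  fixes N :: "'a \<Rightarrow> nat set"
  assumes N: "N \<in> measurable M (count_space UNIV)" "\<And>\<omega>. \<omega> \<in> space M \<Longrightarrow> N \<omega> \<subseteq> A"
    and "finite A" and X: "\<And>j. j \<in> A \<Longrightarrow> X j \<in> borel_measurable M"
  shows "(\<lambda>\<omega>. smean (N \<omega>) (\<lambda>j. X j \<omega>)) \<in> borel_measurable M"
proof -
  have [measurable]: "(\<lambda>\<omega>. f (N \<omega>)) \<in> borel_measurable M" for f :: "nat set \<Rightarrow> real"
    using measurable_compose[OF N(1), of f borel] by simp
  have "(\<lambda>\<omega>. (\<Sum>j\<in>A. indicator (N \<omega>) j * X j \<omega>) / real (card (N \<omega>))) \<in> borel_measurable M"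
    using X by measurable
  moreover have "smean (N \<omega>) (\<lambda>j. X j \<omega>) = (\<Sum>j\<in>A. indicator (N \<omega>) j * X j \<omega>) / real (card (N \<omega>))"
    if "\<omega> \<in> space M" for \<omega>
  proof -
    have "(\<Sum>j\<in>A. indicator (N \<omega>) j * X j \<omega>) = (\<Sum>j\<in>A. if j \<in> N \<omega> then X j \<omega> else 0)"
      by (intro sum.cong) (auto simp: indicator_def)
    also have "\<dots> = (\<Sum>j\<in>N \<omega>. X j \<omega>)"
      using N(2)[OF that] \<open>finite A\<close>
      by (simp add: sum.inter_filter[symmetric] Int_absorb1 Collect_mem_eq Int_def[symmetric])
    finally have sum_eq: "(\<Sum>j\<in>A. indicator (N \<omega>) j * X j \<omega>) = (\<Sum>j\<in>N \<omega>. X j \<omega>)" .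
    show ?thesis
      unfolding smean_def sum_eq ..
  qed
  ultimately show ?thesis
    by (simp cong: measurable_cong)
qed

lemma
  fixes N :: "'a \<Rightarrow> nat set"
  assumes N: "N \<in> measurable M (count_space UNIV)" "\<And>\<omega>. \<omega> \<in> space M \<Longrightarrow> N \<omega> \<subseteq> {..<n}"
    and X: "\<And>j. j < n \<Longrightarrow> X j \<in> borel_measurable M"
  shows borel_measurable_studentized_sum:
      "(\<lambda>\<omega>. studentized_sum n (N \<omega>) (\<lambda>j. X j \<omega>)) \<in> borel_measurable M"
    and borel_measurable_studentized_contrast:
      "(\<lambda>\<omega>. studentized_contrast n (N \<omega>) (\<lambda>j. X j \<omega>)) \<in> borel_measurable M"
proof -
  have [measurable]: "(\<lambda>\<omega>. smean (N \<omega>) (\<lambda>j. X j \<omega>)) \<in> borel_measurable M"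
    by (rule borel_measurable_smean[OF N]) (auto intro: X)
  have "(\<lambda>\<omega>. {..<n} - N \<omega>) \<in> measurable M (count_space UNIV)"
    using measurable_compose[OF N(1), of "\<lambda>B. {..<n} - B" "count_space UNIV"] by simp
  then have [measurable]: "(\<lambda>\<omega>. smean ({..<n} - N \<omega>) (\<lambda>j. X j \<omega>)) \<in> borel_measurable M"
    by (rule borel_measurable_smean[where A = "{..<n}"]) (auto intro: X)
  have "(\<lambda>\<omega>. smean {..<n} (\<lambda>j. X j \<omega>)) \<in> borel_measurable M"
    by (rule borel_measurable_smean[where A = "{..<n}"]) (auto intro: X)
  then have "(\<lambda>\<omega>. \<Sum>j<n. (X j \<omega> - smean {..<n} (\<lambda>j. X j \<omega>))\<^sup>2) \<in> borel_measurable M"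
    using X by (intro borel_measurable_sum borel_measurable_power borel_measurable_diff) auto
  then have [measurable]: "(\<lambda>\<omega>. Sstar n (\<lambda>j. X j \<omega>)) \<in> borel_measurable M"
    unfolding Sstar_def by measurable
  show "(\<lambda>\<omega>. studentized_sum n (N \<omega>) (\<lambda>j. X j \<omega>)) \<in> borel_measurable M"
       "(\<lambda>\<omega>. studentized_contrast n (N \<omega>) (\<lambda>j. X j \<omega>)) \<in> borel_measurable M"
    unfolding studentized_sum_def studentized_contrast_def by measurable
qed

lemma (in prob_space) prob_indep_vars_INT_pos:
  assumes "indep_vars (\<lambda>_. borel) X I" "finite I" "I \<noteq> {}"
    and "\<And>j. j \<in> I \<Longrightarrow> A j \<in> sets borel"
    and "\<And>j. j \<in> I \<Longrightarrow> 0 < prob (X j -` A j \<inter> space M)"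
  shows "0 < prob (\<Inter>j\<in>I. X j -` A j \<inter> space M)"
proof -
  have "prob (\<Inter>j\<in>I. X j -` A j \<inter> space M) = (\<Prod>j\<in>I. prob (X j -` A j \<inter> space M))"
    using assms(1-4) unfolding indep_vars_def
    by (intro indep_setsD) (auto intro: sigma_sets.Basic)
  also have "\<dots> > 0"
    using assms(5) by (intro prod_pos) auto
  finally show ?thesis .
qed

lemma (in prob_space) prob_std_normal_Ioc_pos:
  assumes "distributed M lborel X std_normal_density" "a < b"
  shows "0 < prob (X -` {a<..b} \<inter> space M)"
proof -
  have "emeasure M (X -` {a<..b} \<inter> space M) = emeasure (density lborel std_normal_density) {a<..b}"
    using distributed_emeasure[OF assms(1)] by (simp add: emeasure_density)
  then have "prob (X -` {a<..b} \<inter> space M) = measure (density lborel std_normal_density) {a<..b}"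
    by (simp add: measure_def)
  also have "\<dots> > 0"
    using assms(2) by (intro measure_density_lborel_Ioc_pos normal_density_pos) auto
  finally show ?thesis .
qed

lemma (in prob_space) studentized_sum_unbounded_below:
  assumes indep: "indep_vars (\<lambda>_. borel) X {..<n}"
    and normal: "\<And>j. j < n \<Longrightarrow> distributed M lborel (X j) std_normal_density"
    and "2 \<le> n" and N: "\<And>\<omega>. \<omega> \<in> space M \<Longrightarrow> N \<omega> \<subseteq> {..<n} \<and> 2 * card (N \<omega>) = n"
  shows "\<exists>E\<in>sets M. 0 < prob E \<and> (\<forall>\<omega>\<in>E. studentized_sum n (N \<omega>) (\<lambda>j. X j \<omega>) < B)"
proof -
  define \<delta> :: real where "\<delta> = 1 / (\<bar>B\<bar> + 1)"
  have "0 < \<delta>"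
    by (simp add: \<delta>_def add_pos_nonneg)
  \<comment> \<open>\<open>X 0\<close> is kept apart from the other observations so that \<open>S* > 0\<close>.\<close>
  define I where "I j = (if j = 0 then {-1 - \<delta><..-1 - \<delta>/2} else {-1 - \<delta>/2<..-1})" for j :: nat
  define E where "E = (\<Inter>j\<in>{..<n}. X j -` I j \<inter> space M)"
  have X [measurable]: "X j \<in> borel_measurable M" if "j < n" for j
    using distributed_measurable[OF normal[OF that]] by simp
  have "E \<in> sets M"
    unfolding E_def I_def using \<open>2 \<le> n\<close> by (intro sets.finite_INT) (auto simp: lessThan_empty_iff)
  moreover have "0 < prob E"
  proof -
    have "0 < prob (X j -` I j \<inter> space M)" if "j < n" for j
      using that \<open>0 < \<delta>\<close> by (auto simp: I_def intro!: prob_std_normal_Ioc_pos normal)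
    then show ?thesis
      unfolding E_def using \<open>2 \<le> n\<close>
      by (intro prob_indep_vars_INT_pos[OF indep]) (auto simp: I_def lessThan_empty_iff)
  qed
  moreover have "studentized_sum n (N \<omega>) (\<lambda>j. X j \<omega>) < B" if "\<omega> \<in> E" for \<omega>
  proof -
    have box: "X j \<omega> \<in> I j" "\<omega> \<in> space M" if "j < n" for j
      using \<open>\<omega> \<in> E\<close> that unfolding E_def by blast+
    have "studentized_sum n (N \<omega>) (\<lambda>j. X j \<omega>) < -1 / \<delta>"
    proof (rule studentized_sum_less)
      show "X j \<omega> \<in> {- 1 - \<delta><..- 1}" if "j < n" for j
        using box(1)[OF that] \<open>0 < \<delta>\<close> by (auto simp: I_def split: if_splits)
      show "X 0 \<omega> \<noteq> X 1 \<omega>"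
        using box(1)[of 0] box(1)[of 1] \<open>2 \<le> n\<close> by (auto simp: I_def)
    qed (use N box(2)[of 0] \<open>2 \<le> n\<close> in auto)
    also have "-1 / \<delta> < B"
      by (simp add: \<delta>_def)
    finally show ?thesis .
  qed
  ultimately show ?thesis
    by blast
qed

lemma (in prob_space) distr_neq_of_prob_below:
  fixes Y Z :: "'a \<Rightarrow> real"
  assumes [measurable]: "Y \<in> borel_measurable M" "Z \<in> borel_measurable M"
    and "E \<in> sets M" "0 < prob E" "\<And>\<omega>. \<omega> \<in> E \<Longrightarrow> Y \<omega> < w"
    and "\<And>\<omega>. \<omega> \<in> space M \<Longrightarrow> w \<le> Z \<omega>"
  shows "distr M borel Y \<noteq> distr M borel Z"
proof -
  have "E \<subseteq> Y -` {..<w} \<inter> space M"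
    using assms(5) sets.sets_into_space[OF \<open>E \<in> sets M\<close>] by auto
  moreover have "Y -` {..<w} \<inter> space M \<in> sets M"
    by (rule measurable_sets[OF assms(1)]) simp
  ultimately have "prob E \<le> prob (Y -` {..<w} \<inter> space M)"
    by (rule finite_measure_mono)
  also have "\<dots> = measure (distr M borel Y) {..<w}"
    by (simp add: measure_distr)
  finally have "prob E \<le> measure (distr M borel Y) {..<w}" .
  moreover have "Z -` {..<w} \<inter> space M = {}"
    using assms(6) by force
  then have "measure (distr M borel Z) {..<w} = 0"
    by (simp add: measure_distr)
  ultimately show ?thesis
    using \<open>0 < prob E\<close> by auto
qed

lemma distr_PiM_swap_neq:
  fixes T T0 :: "'i \<Rightarrow> 'a \<Rightarrow> real"
  assumes "i \<in> I" "\<And>k. k \<in> I \<Longrightarrow> T k \<in> borel_measurable M \<and> T0 k \<in> borel_measurable M"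
    and "distr M borel (T i) \<noteq> distr M borel (T0 i)"
  shows "distr M (PiM I (\<lambda>_. borel \<Otimes>\<^sub>M borel)) (\<lambda>\<omega>. \<lambda>k\<in>I. (T k \<omega>, T0 k \<omega>))
    \<noteq> distr M (PiM I (\<lambda>_. borel \<Otimes>\<^sub>M borel))
        (\<lambda>\<omega>. \<lambda>k\<in>I. if k = i then (T0 k \<omega>, T k \<omega>) else (T k \<omega>, T0 k \<omega>))"
    (is "distr M ?P ?F \<noteq> distr M ?P ?G")
proof
  assume eq: "distr M ?P ?F = distr M ?P ?G"
  have [measurable]: "?F \<in> measurable M ?P"
    using assms(2) by (auto intro!: measurable_restrict measurable_Pair)
  have "(\<lambda>\<omega>. if k = i then (T0 k \<omega>, T k \<omega>) else (T k \<omega>, T0 k \<omega>)) \<in> measurable M (borel \<Otimes>\<^sub>M borel)"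
    if "k \<in> I" for k
    using assms(2)[OF that] by (cases "k = i") (auto intro!: measurable_Pair)
  then have [measurable]: "?G \<in> measurable M ?P"
    by (rule measurable_restrict)
  have [measurable]: "(\<lambda>x. fst (x i)) \<in> measurable ?P borel"
    using assms(1) by measurable
  have "distr M borel (T i) = distr (distr M ?P ?F) borel (\<lambda>x. fst (x i))"
    using assms(1) by (subst distr_distr) (auto intro!: distr_cong)
  also have "\<dots> = distr (distr M ?P ?G) borel (\<lambda>x. fst (x i))"
    by (simp add: eq)
  also have "\<dots> = distr M borel (T0 i)"
    using assms(1) by (subst distr_distr) (auto intro!: distr_cong)
  finally show False
    using assms(3) by simp
qed

lemma borel_measurable_Phi_inv_t_CDF:
  assumes "1 \<le> \<nu>"
  shows "(\<lambda>y. Phi_inv (t_CDF \<nu> y)) \<in> borel_measurable borel"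
  using borel_measurable_mono[OF mono_t_CDF[OF assms]]
  by (intro measurable_compose[OF _ borel_measurable_Phi_inv]) simp

lemma (in prob_space) distr_Tstar_neq_distr_T0star:
  assumes indep: "indep_vars (\<lambda>_. borel) X {..<n}"
    and normal: "\<And>j. j < n \<Longrightarrow> distributed M lborel (X j) std_normal_density"
    and "even n" "4 \<le> n"
    and N: "N \<in> measurable M (count_space UNIV)"
    and split: "\<And>\<omega>. \<omega> \<in> space M \<Longrightarrow> N \<omega> \<subseteq> {..<n} \<and> card (N \<omega>) = n div 2"
  shows "distr M borel (\<lambda>\<omega>. Tstar n (N \<omega>) (\<lambda>j. X j \<omega>))
    \<noteq> distr M borel (\<lambda>\<omega>. T0star n (N \<omega>) (\<lambda>j. X j \<omega>))"
proof -
  define g where "g y = Phi_inv (t_CDF (real n - 2) y)" for y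
  let ?V = "\<lambda>\<omega>. studentized_sum n (N \<omega>) (\<lambda>j. X j \<omega>)"
  let ?W = "\<lambda>\<omega>. studentized_contrast n (N \<omega>) (\<lambda>j. X j \<omega>)"
  have \<nu>: "1 \<le> real n - 2"
    using \<open>4 \<le> n\<close> by simp
  have halves: "N \<omega> \<subseteq> {..<n} \<and> 2 * card (N \<omega>) = n" if "\<omega> \<in> space M" for \<omega>
    using split[OF that] \<open>even n\<close> by auto
  have X: "X j \<in> borel_measurable M" if "j < n" for j
    using distributed_measurable[OF normal[OF that]] by simp
  have "g \<in> borel_measurable borel"
    unfolding g_def using borel_measurable_Phi_inv_t_CDF[OF \<nu>] by simp
  then have [measurable]: "(\<lambda>\<omega>. g (?V \<omega>)) \<in> borel_measurable M" "(\<lambda>\<omega>. g (?W \<omega>)) \<in> borel_measurable M"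
    using borel_measurable_studentized_sum[OF N _ X] borel_measurable_studentized_contrast[OF N _ X]
      split by (auto intro: measurable_compose)
  obtain w y0 where sep: "\<And>y. - 2 * sqrt (real n - 1) \<le> y \<Longrightarrow> w < g y" "\<And>y. y \<le> y0 \<Longrightarrow> g y < w"
    using Phi_inv_comp_separates[OF mono_t_CDF[OF \<nu>] t_CDF_pos[OF \<nu>] t_CDF_tendsto_at_bot[OF \<nu>]]
    unfolding g_def by blast
  have "\<exists>E\<in>sets M. 0 < prob E \<and> (\<forall>\<omega>\<in>E. ?V \<omega> < y0)"
    by (rule studentized_sum_unbounded_below[OF indep normal]) (use halves \<open>4 \<le> n\<close> in auto)
  then obtain E where E: "E \<in> sets M" "0 < prob E" "\<And>\<omega>. \<omega> \<in> E \<Longrightarrow> ?V \<omega> < y0"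
    by blast
  have "w \<le> g (?W \<omega>)" if "\<omega> \<in> space M" for \<omega>
    by (rule less_imp_le, rule sep(1), rule studentized_contrast_lower_bound)
      (use halves[OF that] \<open>4 \<le> n\<close> in auto)
  moreover have "g (?V \<omega>) < w" if "\<omega> \<in> E" for \<omega>
    using sep(2) E(3)[OF that] by simp
  ultimately have "distr M borel (\<lambda>\<omega>. g (?V \<omega>)) \<noteq> distr M borel (\<lambda>\<omega>. g (?W \<omega>))"
    by (intro distr_neq_of_prob_below[OF _ _ E(1,2)]) auto
  moreover have "Tstar n (N \<omega>) (\<lambda>j. X j \<omega>) = g (?V \<omega>)" "T0star n (N \<omega>) (\<lambda>j. X j \<omega>) = g (?W \<omega>)" for \<omega>
    by (simp_all add: Tstar_def T0star_def g_def studentized_sum_def studentized_contrast_def)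
  ultimately show ?thesis
    by simp
qed

theorem proposition5:
  fixes M :: "'a measure" and X :: "nat \<Rightarrow> 'a \<Rightarrow> real"
    and N1 :: "'a \<Rightarrow> nat set" and n :: nat
  assumes "prob_space M"
    and "even n" and "n \<ge> 4"
    and "prob_space.indep_vars M (\<lambda>_. borel) X {..<n}"
    and "\<And>j. j < n \<Longrightarrow> distributed M lborel (X j) std_normal_density"
    and "N1 \<in> measurable M (count_space UNIV)"
    and "\<And>\<omega>. \<omega> \<in> space M \<Longrightarrow> N1 \<omega> \<subseteq> {..<n} \<and> card (N1 \<omega>) = n div 2"
    and "prob_space.indep_var M (PiM {..<n} (\<lambda>_. borel)) (\<lambda>\<omega>. \<lambda>j\<in>{..<n}. X j \<omega>)
           (PiM {..<n} (\<lambda>_. borel)) (\<lambda>\<omega>. \<lambda>j\<in>{..<n}. indicator (N1 \<omega>) j)"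
  shows "distr M borel (\<lambda>\<omega>. Tstar n (N1 \<omega>) (\<lambda>j. X j \<omega>))
           \<noteq> distr M borel (\<lambda>\<omega>. T0star n (N1 \<omega>) (\<lambda>j. X j \<omega>))
       \<and> (\<forall>(m::nat) i (T :: nat \<Rightarrow> 'a \<Rightarrow> real) (T0 :: nat \<Rightarrow> 'a \<Rightarrow> real).
            i < m
            \<and> (\<forall>\<omega>\<in>space M. T i \<omega> = Tstar n (N1 \<omega>) (\<lambda>j. X j \<omega>)
                             \<and> T0 i \<omega> = T0star n (N1 \<omega>) (\<lambda>j. X j \<omega>))
            \<and> (\<forall>k<m. T k \<in> borel_measurable M \<and> T0 k \<in> borel_measurable M)
            \<longrightarrow> distr M (PiM {..<m} (\<lambda>_. borel \<Otimes>\<^sub>M borel))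
                   (\<lambda>\<omega>. \<lambda>k\<in>{..<m}. (T k \<omega>, T0 k \<omega>))
                \<noteq> distr M (PiM {..<m} (\<lambda>_. borel \<Otimes>\<^sub>M borel))
                   (\<lambda>\<omega>. \<lambda>k\<in>{..<m}. if k = i then (T0 k \<omega>, T k \<omega>) else (T k \<omega>, T0 k \<omega>)))"
proof -
  interpret prob_space M
    by fact
  have marginal: "distr M borel (\<lambda>\<omega>. Tstar n (N1 \<omega>) (\<lambda>j. X j \<omega>))
      \<noteq> distr M borel (\<lambda>\<omega>. T0star n (N1 \<omega>) (\<lambda>j. X j \<omega>))"
    by (rule distr_Tstar_neq_distr_T0star[OF assms(4,5,2,3,6,7)])
  show ?thesis
  proof (intro conjI allI impI)
    fix m i and T T0 :: "nat \<Rightarrow> 'a \<Rightarrow> real"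
    assume H: "i < m \<and> (\<forall>\<omega>\<in>space M. T i \<omega> = Tstar n (N1 \<omega>) (\<lambda>j. X j \<omega>)
        \<and> T0 i \<omega> = T0star n (N1 \<omega>) (\<lambda>j. X j \<omega>))
      \<and> (\<forall>k<m. T k \<in> borel_measurable M \<and> T0 k \<in> borel_measurable M)"
    then have "distr M borel (T i) \<noteq> distr M borel (T0 i)"
      using marginal by (metis (no_types, lifting) distr_cong)
    with H show "distr M (PiM {..<m} (\<lambda>_. borel \<Otimes>\<^sub>M borel)) (\<lambda>\<omega>. \<lambda>k\<in>{..<m}. (T k \<omega>, T0 k \<omega>))
      \<noteq> distr M (PiM {..<m} (\<lambda>_. borel \<Otimes>\<^sub>M borel))
          (\<lambda>\<omega>. \<lambda>k\<in>{..<m}. if k = i then (T0 k \<omega>, T k \<omega>) else (T k \<omega>, T0 k \<omega>))"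
      by (intro distr_PiM_swap_neq) auto
  qed (rule marginal)
qed

end
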